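(* In the setting described in the context, for $n\ge0$ let $\tilde\mu'_{m,n}=\max\{x\in[\min P,d]: f^{m+2n}(x)=d\}$, and for $k\ge1$ let $\tilde\mu_{m,n,k}=\min\{x\in[\tilde\mu'_{m,n},\tilde\mu'_{m,n+1}]: f^{m+2n+2k}(x)=d\}$ (these sets are nonempty). Then for each $n\ge1$ and $k\ge1$, every periodic point of $f$ in $[\tilde\mu'_{m,n},\tilde\mu_{m,n,k}]$ whose least period is odd has least period $\ge m+2n+2k+2$.
   Context: Let $I$ be a compact interval and $f:I\to I$ continuous; $f^1=f$, $f^n=f\circ f^{n-1}$. A point $x_0$ is a periodic point of least period $k$ (a period-$k$ point) if $f^k(x_0)=x_0$ and $f^i(x_0)\ne x_0$ for $0<i<k$. Let $m\ge3$ be odd and let $P$ be a periodic orbit of $f$ of least period $m$. Put $e=f^{m-1}(\min P)$. Let $v\in[\min P,e)$ be a point with $f(v)=e$, and let $z\in(v,e)$ be a fixed point of $f$ (such points exist). Define $z_0=\min\{x\in[v,z]: f^2(x)=x\}$ and $d=\max\{x\in[\min P,v]: f^2(x)=z_0\}$ (both sets are nonempty). *)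

theory Defs
  imports "HOL-Analysis.Analysis"
begin

definition least_period_point :: "(real \<Rightarrow> real) \<Rightarrow> nat \<Rightarrow> real \<Rightarrow> bool" where
  "least_period_point f k x \<longleftrightarrow>
     0 < k \<and> (f ^^ k) x = x \<and> (\<forall>i. 0 < i \<and> i < k \<longrightarrow> (f ^^ i) x \<noteq> x)"

end

theory Submission
  imports Defs
begin

text \<open>
  The orbit of d lands on the 2-cycle {z0, f z0} lying above v, while \<open>f \<circ> f\<close> maps [d, v]
  over \<open>[min P, z0] \<supseteq> [d, v]\<close>; so every even iterate of f sends some point of [d, v] to d.
  Together with \<open>f\<^sup>m (min P) = min P\<close> and \<open>f\<^sup>m d = f z0 > v\<close> this shows that mu' n and
  mu n k are well defined and that \<open>mu' n < mu' (n + 1)\<close>. Now let \<open>x \<in> [mu' n, mu n k]\<close>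
  satisfy \<open>f\<^sup>q x = x\<close> with q odd; as d is not periodic, no iterate of x is d. If
  \<open>q \<le> m + 2n\<close>, the intermediate value theorem for \<open>f\<^sup>q\<close> (for \<open>f\<^sup>3\<close> if q = 1) on [x, d]
  gives a point of [x, d] other than x that \<open>f\<^bsup>m+2n\<^esup>\<close> sends to d, contradicting the
  maximality of mu' n. If \<open>q = m + 2n + 2j\<close> with \<open>1 \<le> j \<le> k\<close>, then \<open>f\<^sup>q (mu' n) = z0\<close>, and
  the same argument on [mu' n, x] contradicts the minimality of mu n k.
\<close>

lemma closed_bdd_above_GREATEST:
  fixes Q :: "real \<Rightarrow> bool"
  assumes "closed {x. Q x}" "Q x0" "bdd_above {x. Q x}"
  shows "Q (GREATEST x. Q x)" and "\<And>u. Q u \<Longrightarrow> u \<le> (GREATEST x. Q x)"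
proof -
  have Sup_in: "Q (Sup {x. Q x})"
    using closed_contains_Sup[of "{x. Q x}"] assms by auto
  have Sup_upper: "\<And>u. Q u \<Longrightarrow> u \<le> Sup {x. Q x}"
    using assms(3) by (auto intro: cSup_upper)
  have "(GREATEST x. Q x) = Sup {x. Q x}"
    using Sup_in Sup_upper by (intro Greatest_equality)
  with Sup_in Sup_upper show "Q (GREATEST x. Q x)" and "\<And>u. Q u \<Longrightarrow> u \<le> (GREATEST x. Q x)"
    by auto
qed

lemma closed_bdd_below_LEAST:
  fixes Q :: "real \<Rightarrow> bool"
  assumes "closed {x. Q x}" "Q x0" "bdd_below {x. Q x}"
  shows "Q (LEAST x. Q x)" and "\<And>u. Q u \<Longrightarrow> (LEAST x. Q x) \<le> u"
proof -
  have Inf_in: "Q (Inf {x. Q x})"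
    using closed_contains_Inf[of "{x. Q x}"] assms by auto
  have Inf_lower: "\<And>u. Q u \<Longrightarrow> Inf {x. Q x} \<le> u"
    using assms(3) by (auto intro: cInf_lower)
  have "(LEAST x. Q x) = Inf {x. Q x}"
    using Inf_in Inf_lower by (intro Least_equality)
  with Inf_in Inf_lower show "Q (LEAST x. Q x)" and "\<And>u. Q u \<Longrightarrow> (LEAST x. Q x) \<le> u"
    by auto
qed

lemma closed_level_set_atLeastAtMost:
  fixes h :: "real \<Rightarrow> real"
  assumes "continuous_on {c..c'} h"
  shows "closed {x. x \<in> {c..c'} \<and> h x = y}"
  using continuous_closed_preimage_constant[OF assms closed_atLeastAtMost, of y] by simp

lemma IVT_between:
  fixes h :: "real \<Rightarrow> real"
  assumes "continuous_on {c..c'} h" "c \<le> c'"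
    and "min (h c) (h c') \<le> y" "y \<le> max (h c) (h c')"
  shows "\<exists>x\<in>{c..c'}. h x = y"
proof (cases "h c \<le> h c'")
  case True
  then show ?thesis using IVT'[of h c y c'] assms by auto
next
  case False
  then show ?thesis using IVT2'[of h c' y c] assms by auto
qed

lemma below_diagonal_if_no_fixed_point:
  fixes h :: "real \<Rightarrow> real"
  assumes "continuous_on {c..u} h" "c \<le> u" "h c < c" "\<And>t. t \<in> {c..u} \<Longrightarrow> h t \<noteq> t"
  shows "h u < u"
proof (rule ccontr)
  assume "\<not> h u < u"
  moreover have "continuous_on {c..u} (\<lambda>t. h t - t)"
    using assms(1) by (intro continuous_intros)
  ultimately obtain t where "t \<in> {c..u}" "h t - t = 0"
    using IVT_between[of c u "\<lambda>t. h t - t" 0] assms(2,3) by auto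
  with assms(4) show False by simp
qed

lemma funpow_image_subset: "f ` S \<subseteq> S \<Longrightarrow> (f ^^ n) ` S \<subseteq> S"
  by (induction n) (auto simp: image_subset_iff)

lemma continuous_on_funpow:
  assumes "continuous_on S f" "f ` S \<subseteq> S"
  shows "continuous_on S (f ^^ n)"
proof (induction n)
  case (Suc n)
  have "continuous_on S (f \<circ> (f ^^ n))"
  proof (rule continuous_on_compose)
    show "continuous_on ((f ^^ n) ` S) f"
      using assms(1) funpow_image_subset[OF assms(2)] by (rule continuous_on_subset)
  qed (fact Suc)
  then show ?case by simp
qed (simp add: continuous_on_id)

lemma funpow_image_superset:
  assumes "T \<subseteq> g ` S" "S \<subseteq> T"
  shows "T \<subseteq> (g ^^ Suc j) ` S"
proof (induction j)
  case (Suc j)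
  have "T \<subseteq> g ` S" by (fact assms(1))
  also have "\<dots> \<subseteq> g ` (g ^^ Suc j) ` S"
    using Suc assms(2) by (intro image_mono) blast
  finally show ?case by (simp add: image_comp)
qed (simp add: assms(1))

lemma funpow_add_apply: "(f ^^ (i + j)) x = (f ^^ j) ((f ^^ i) x)"
  by (subst add.commute) (simp add: funpow_add)

lemma funpow_fixed_mult: "(f ^^ q) x = x \<Longrightarrow> (f ^^ (t * q)) x = x"
  using funpow_mod_eq[where f = f and n = q and x = x and m = "t * q"] by simp

lemma funpow_fixed_along_orbit:
  assumes "(f ^^ q) x = x" shows "(f ^^ q) ((f ^^ i) x) = (f ^^ i) x"
  using funpow_add_apply[of i q f x] funpow_add_apply[of q i f x] assms by (simp add: add.commute)

lemma least_period_point_funpow: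
  assumes "least_period_point f m p"
  shows "least_period_point f m ((f ^^ i) p)"
  unfolding least_period_point_def
proof (intro conjI allI impI)
  have per: "(f ^^ m) p = p" and m: "0 < m" and least: "\<And>j. 0 < j \<Longrightarrow> j < m \<Longrightarrow> (f ^^ j) p \<noteq> p"
    using assms unfolding least_period_point_def by auto
  show "0 < m" by (fact m)
  show "(f ^^ m) ((f ^^ i) p) = (f ^^ i) p"
    using per by (rule funpow_fixed_along_orbit)
  fix j assume j: "0 < j \<and> j < m"
  define r where "r = m * Suc i - i"
  have return: "(f ^^ r) ((f ^^ i) p) = p"
  proof -
    have "i \<le> Suc i * m" using m by (cases m) auto
    then have "r + i = Suc i * m" unfolding r_def by (simp add: mult.commute)
    then have "(f ^^ r) ((f ^^ i) p) = (f ^^ (Suc i * m)) p"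
      using funpow_add_apply[of i r f p] by (simp add: add.commute)
    then show ?thesis using funpow_fixed_mult[OF per, where t = "Suc i"] by simp
  qed
  show "(f ^^ j) ((f ^^ i) p) \<noteq> (f ^^ i) p"
  proof
    assume "(f ^^ j) ((f ^^ i) p) = (f ^^ i) p"
    then have "(f ^^ j) p = p"
      using return funpow_fixed_along_orbit[where f = f and q = j and x = "(f ^^ i) p" and i = r] by simp
    with least j show False by blast
  qed
qed

lemma funpow_eventually_2_periodic:
  assumes "f (f d) = z" "f (f z) = z"
  shows "\<And>T. even T \<Longrightarrow> 2 \<le> T \<Longrightarrow> (f ^^ T) d = z"
    and "\<And>T. odd T \<Longrightarrow> 3 \<le> T \<Longrightarrow> (f ^^ T) d = f z"
proof -
  have z_even: "(f ^^ (2 * j)) z = z" for j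
    by (induction j) (use assms(2) in auto)
  have d_even: "(f ^^ (2 * j + 2)) d = z" for j
  proof -
    have "(f ^^ (2 * j + 2)) d = (f ^^ (2 * j)) (f (f d))"
      by (simp only: funpow_add comp_apply) (simp add: numeral_2_eq_2)
    then show ?thesis using z_even assms(1) by simp
  qed
  show "(f ^^ T) d = z" if T: "even T" "2 \<le> T" for T
  proof -
    from T obtain i where "T = 2 * i" by (auto elim: evenE)
    with T have "T = 2 * (i - 1) + 2" by simp
    then show ?thesis using d_even[of "i - 1"] by simp
  qed
  show "(f ^^ T) d = f z" if T: "odd T" "3 \<le> T" for T
  proof -
    from T obtain i where "T = 2 * i + 1" by (auto elim: oddE)
    with T have "T = Suc (2 * (i - 1) + 2)" by simp
    then show ?thesis using d_even[of "i - 1"] by simp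
  qed
qed

locale odd_cycle_setup =
  fixes f :: "real \<Rightarrow> real" and a b :: real and m :: nat and p :: real
    and P :: "real set" and e v z z0 d :: real
    and mu' :: "nat \<Rightarrow> real" and mu :: "nat \<Rightarrow> nat \<Rightarrow> real"
  assumes ab: "a \<le> b"
    and cont: "continuous_on {a..b} f"
    and maps: "f ` {a..b} \<subseteq> {a..b}"
    and m_odd: "odd m" and m_ge: "m \<ge> 3"
    and p_in: "p \<in> {a..b}"
    and p_per: "least_period_point f m p"
    and P_def: "P = {(f ^^ i) p | i. i < m}"
    and e_def: "e = (f ^^ (m - 1)) (Min P)"
    and v: "v \<in> {Min P..<e}" "f v = e"
    and z: "z \<in> {v<..<e}" "f z = z"
    and z0_def: "z0 = (LEAST x. x \<in> {v..z} \<and> f (f x) = x)"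
    and d_def: "d = (GREATEST x. x \<in> {Min P..v} \<and> f (f x) = z0)"
    and mu'_def: "\<And>n. mu' n = (GREATEST x. x \<in> {Min P..d} \<and> (f ^^ (m + 2*n)) x = d)"
    and mu_def: "\<And>n k. mu n k =
        (LEAST x. x \<in> {mu' n..mu' (n+1)} \<and> (f ^^ (m + 2*n + 2*k)) x = d)"
begin

lemma continuous_on_iterate: "a \<le> c \<Longrightarrow> c' \<le> b \<Longrightarrow> continuous_on {c..c'} (f ^^ n)"
  using continuous_on_funpow[OF cont maps] by (rule continuous_on_subset) auto

lemma IVT_iterate:
  assumes "a \<le> c" "c \<le> c'" "c' \<le> b"
    and "min ((f ^^ N) c) ((f ^^ N) c') \<le> y" "y \<le> max ((f ^^ N) c) ((f ^^ N) c')"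
  shows "\<exists>x\<in>{c..c'}. (f ^^ N) x = y"
  using IVT_between[OF continuous_on_iterate] assms by blast

lemma continuous_on_f2: "a \<le> c \<Longrightarrow> c' \<le> b \<Longrightarrow> continuous_on {c..c'} (\<lambda>x. f (f x))"
  using continuous_on_iterate[where n = 2] by (simp add: numeral_2_eq_2)

lemma iterate_in_ab: "x \<in> {a..b} \<Longrightarrow> (f ^^ n) x \<in> {a..b}"
  using funpow_image_subset[OF maps] by blast

lemma p_period: "(f ^^ m) p = p" and m_pos: "0 < m"
  using p_per unfolding least_period_point_def by auto

lemma P_image: "P = (\<lambda>i. (f ^^ i) p) ` {..<m}"
  unfolding P_def by auto

lemma finite_P: "finite P" and P_nonempty: "P \<noteq> {}"
  using P_image m_pos by auto

lemma iterate_in_P: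
  assumes "x \<in> P" shows "(f ^^ j) x \<in> P"
proof -
  obtain i where "x = (f ^^ i) p" using assms P_image by auto
  then have "(f ^^ j) x = (f ^^ ((j + i) mod m)) p"
    by (simp add: funpow_mod_eq[OF p_period] funpow_add)
  then show ?thesis using m_pos unfolding P_image by simp
qed

lemma P_subset_ab: "P \<subseteq> {a..b}"
  unfolding P_image using iterate_in_ab p_in by auto

lemma Min_P_in_P: "Min P \<in> P" and Min_P_le: "x \<in> P \<Longrightarrow> Min P \<le> x"
  using finite_P P_nonempty by auto

lemma least_period_Min_P: "least_period_point f m (Min P)"
  using Min_P_in_P P_image least_period_point_funpow[OF p_per] by auto

lemma f_e: "f e = Min P"
proof -
  have "f e = (f ^^ Suc (m - 1)) (Min P)" using e_def by simp
  also have "\<dots> = Min P"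
    using m_pos least_period_Min_P unfolding least_period_point_def by simp
  finally show ?thesis .
qed

lemma e_in_P: "e \<in> P"
  using e_def iterate_in_P Min_P_in_P by simp

lemma points_in_ab: "Min P \<in> {a..b}" "e \<in> {a..b}" "v \<in> {a..b}" "z \<in> {a..b}"
  using Min_P_in_P e_in_P P_subset_ab v(1) z(1) by auto

lemma f2_v: "f (f v) = Min P"
  using v(2) f_e by simp

lemma Min_P_less_v: "Min P < v"
proof -
  have "(f ^^ 2) (Min P) \<noteq> Min P"
    using least_period_Min_P m_ge unfolding least_period_point_def by simp
  then have "v \<noteq> Min P" using f2_v by (auto simp: numeral_2_eq_2)
  then show ?thesis using v(1) by simp
qed

lemma z0_in: "z0 \<in> {v..z}" and f2_z0: "f (f z0) = z0"
  and z0_least: "u \<in> {v..z} \<Longrightarrow> f (f u) = u \<Longrightarrow> z0 \<le> u"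
proof -
  let ?Q = "\<lambda>x. x \<in> {v..z} \<and> f (f x) = x"
  have "continuous_on {v..z} (\<lambda>x. f (f x) - x)"
    using continuous_on_f2 points_in_ab by (intro continuous_intros) auto
  from closed_level_set_atLeastAtMost[OF this, of 0] have "closed {x. ?Q x}"
    by simp
  moreover have "?Q z" using z by auto
  moreover have "bdd_below {x. ?Q x}" by (rule bdd_belowI[of _ v]) auto
  ultimately show "z0 \<in> {v..z}" "f (f z0) = z0" "u \<in> {v..z} \<Longrightarrow> f (f u) = u \<Longrightarrow> z0 \<le> u"
    unfolding z0_def using closed_bdd_below_LEAST[of ?Q] by blast+
qed

lemma v_less_z0: "v < z0"
  using z0_in f2_z0 f2_v Min_P_less_v by (cases "z0 = v") auto

lemma z0_less_e: "z0 < e"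
  using z0_in z(1) by auto

lemma z0_in_ab: "z0 \<in> {a..b}"
  using z0_in points_in_ab by auto

lemma f2_below_diagonal:
  assumes "u \<in> {v..<z0}" shows "f (f u) < u"
proof (rule below_diagonal_if_no_fixed_point)
  show "continuous_on {v..u} (\<lambda>x. f (f x))"
    using continuous_on_f2 assms points_in_ab z0_in_ab by auto
  show "\<And>t. t \<in> {v..u} \<Longrightarrow> f (f t) \<noteq> t"
    using z0_least assms z0_in by fastforce
qed (use assms f2_v Min_P_less_v in auto)

lemma z0_le_f_z0: "z0 \<le> f z0"
proof (rule ccontr)
  assume less: "\<not> z0 \<le> f z0"
  show False
  proof (cases "v \<le> f z0")
    case True
    then have "z0 \<le> f z0"
      using z0_least[of "f z0"] less z0_in by (auto simp: f2_z0)
    with less show False by simp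
  next
    case False
    obtain t where t: "t \<in> {v..z0}" "f t = v"
      using IVT_between[of v z0 f v] continuous_on_iterate[where n = 1] points_in_ab z0_in_ab
        v_less_z0 v(2) False z0_less_e by auto
    have "t \<noteq> z0" using t False by auto
    then have "f (f t) < t" using f2_below_diagonal t by auto
    then show False using t v(2) z0_less_e by auto
  qed
qed

lemma f2_reaches_z0: "\<exists>u\<in>{Min P..v}. z0 \<le> f (f u)"
proof (rule ccontr)
  assume none: "\<not> ?thesis"
  \<comment> \<open>then the even iterates of Min P never climb to z0, yet e is one of them\<close>
  have below: "(f ^^ (2 * j)) (Min P) < z0" for j
  proof (induction j)
    case 0
    then show ?case using Min_P_less_v v_less_z0 by simp
  next
    case (Suc j)
    define u where "u = (f ^^ (2 * j)) (Min P)"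
    have "Min P \<le> u" unfolding u_def using Min_P_in_P iterate_in_P Min_P_le by blast
    then have "f (f u) < z0"
      using none f2_below_diagonal[of u] Suc u_def by (cases "u \<le> v") (auto simp: not_le)
    then show ?case unfolding u_def by simp
  qed
  have "2 * ((m - 1) div 2) = m - 1" using m_odd by presburger
  then have "e < z0" using below[of "(m - 1) div 2"] e_def by simp
  then show False using z0_less_e by simp
qed

lemma d_in: "d \<in> {Min P..v}" and f2_d: "f (f d) = z0"
proof -
  let ?Q = "\<lambda>x. x \<in> {Min P..v} \<and> f (f x) = z0"
  obtain u where u: "u \<in> {Min P..v}" "z0 \<le> f (f u)" using f2_reaches_z0 by blast
  then obtain t where "t \<in> {u..v}" "f (f t) = z0"
    using IVT_between[OF continuous_on_f2[of u v], of z0] points_in_ab f2_v Min_P_less_v v_less_z0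
    by auto
  then have "?Q t" using u by auto
  moreover have "closed {x. ?Q x}"
    using closed_level_set_atLeastAtMost[OF continuous_on_f2] points_in_ab by simp
  moreover have "bdd_above {x. ?Q x}" by (rule bdd_aboveI[of _ v]) auto
  ultimately show "d \<in> {Min P..v}" "f (f d) = z0"
    unfolding d_def using closed_bdd_above_GREATEST[of ?Q] by blast+
qed

lemma d_less_z0: "d < z0"
  using d_in v_less_z0 by auto

lemma d_in_ab: "d \<in> {a..b}"
  using d_in points_in_ab by auto

lemma iterate_d_even: "even T \<Longrightarrow> 2 \<le> T \<Longrightarrow> (f ^^ T) d = z0"
  and iterate_d_odd: "odd T \<Longrightarrow> 3 \<le> T \<Longrightarrow> (f ^^ T) d = f z0"
  using funpow_eventually_2_periodic[OF f2_d f2_z0] by blast+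

lemma d_not_periodic:
  assumes "0 < T" shows "(f ^^ T) d \<noteq> d"
proof (cases "T = 1")
  case False
  then have "even T \<and> 2 \<le> T \<or> odd T \<and> 3 \<le> T" using assms by presburger
  then show ?thesis
    using iterate_d_even[of T] iterate_d_odd[of T] d_less_z0 z0_le_f_z0 by auto
qed (use f2_d d_less_z0 in auto)

lemma periodic_orbit_avoids_d:
  assumes "(f ^^ q) x = x" "0 < q" shows "(f ^^ i) x \<noteq> d"
  using funpow_fixed_along_orbit[OF assms(1), of i] d_not_periodic[OF assms(2)] by auto

lemma even_iterate_hits_d: "\<exists>s\<in>{d..v}. (f ^^ (2 * j)) s = d"
proof (cases j)
  case (Suc i)
  have "{Min P..z0} \<subseteq> (f ^^ 2) ` {d..v}"
  proof
    fix y assume "y \<in> {Min P..z0}"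
    then show "y \<in> (f ^^ 2) ` {d..v}"
      using IVT_between[OF continuous_on_iterate[of d v 2], of y] d_in f2_d f2_v points_in_ab
      by (auto simp: numeral_2_eq_2)
  qed
  moreover have "{d..v} \<subseteq> {Min P..z0}" using d_in v_less_z0 by auto
  ultimately have "{Min P..z0} \<subseteq> ((f ^^ 2) ^^ Suc i) ` {d..v}"
    by (rule funpow_image_superset)
  then have "d \<in> ((f ^^ 2) ^^ Suc i) ` {d..v}" using d_in d_less_z0 by auto
  then show ?thesis using Suc by (auto simp: funpow_mult)
qed (use d_in in auto)

lemma mu'_in: "mu' n \<in> {Min P..d}" and iterate_mu': "(f ^^ (m + 2 * n)) (mu' n) = d"
  and mu'_greatest: "u \<in> {Min P..d} \<Longrightarrow> (f ^^ (m + 2 * n)) u = d \<Longrightarrow> u \<le> mu' n"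
proof -
  let ?Q = "\<lambda>x. x \<in> {Min P..d} \<and> (f ^^ (m + 2 * n)) x = d"
  obtain s where s: "s \<in> {d..v}" "(f ^^ (2 * n)) s = d" using even_iterate_hits_d by blast
  have "(f ^^ m) (Min P) = Min P" using least_period_Min_P unfolding least_period_point_def by simp
  moreover have "(f ^^ m) d = f z0" using iterate_d_odd m_odd m_ge by simp
  ultimately have "\<exists>t\<in>{Min P..d}. (f ^^ m) t = s"
    by (intro IVT_iterate) (use s(1) d_in points_in_ab v_less_z0 z0_le_f_z0 in auto)
  then obtain t where t: "t \<in> {Min P..d}" "(f ^^ m) t = s" by blast
  then have "?Q t" using s(2) by (simp add: funpow_add_apply)
  moreover have "closed {x. ?Q x}"
    using closed_level_set_atLeastAtMost[OF continuous_on_iterate] points_in_ab d_in_ab by simp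
  moreover have "bdd_above {x. ?Q x}" by (rule bdd_aboveI[of _ d]) auto
  ultimately show "mu' n \<in> {Min P..d}" "(f ^^ (m + 2 * n)) (mu' n) = d"
    "u \<in> {Min P..d} \<Longrightarrow> (f ^^ (m + 2 * n)) u = d \<Longrightarrow> u \<le> mu' n"
    unfolding mu'_def using closed_bdd_above_GREATEST[of ?Q] by blast+
qed

lemma iterate_mu'_Suc: "(f ^^ (m + 2 * n + 2)) (mu' n) = z0"
  using iterate_mu' f2_d by (simp add: funpow_add_apply numeral_2_eq_2)

lemma mu'_less_Suc: "mu' n < mu' (Suc n)"
proof -
  obtain s where s: "s \<in> {d..v}" "(f ^^ 2) s = d" using even_iterate_hits_d[of 1] by auto
  have "s \<noteq> d" using s f2_d d_less_z0 by (auto simp: numeral_2_eq_2)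
  have "(f ^^ (m + 2 * n)) d = f z0" using iterate_d_odd m_odd m_ge by simp
  then have "\<exists>t\<in>{mu' n..d}. (f ^^ (m + 2 * n)) t = s"
    by (intro IVT_iterate)
      (use iterate_mu'[of n] mu'_in[of n] s(1) points_in_ab v_less_z0 z0_le_f_z0 in auto)
  then obtain t where t: "t \<in> {mu' n..d}" "(f ^^ (m + 2 * n)) t = s" by blast
  have "m + 2 * Suc n = (m + 2 * n) + 2" by simp
  then have "(f ^^ (m + 2 * Suc n)) t = d" using t(2) s(2) by (simp only: funpow_add_apply)
  moreover have "t \<in> {Min P..d}" using t(1) mu'_in[of n] by auto
  ultimately have "t \<le> mu' (Suc n)" by (rule mu'_greatest[rotated])
  moreover have "t \<noteq> mu' n" using t(2) iterate_mu' \<open>s \<noteq> d\<close> by auto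
  ultimately show ?thesis using t(1) by auto
qed

lemma mu_in: "mu n k \<in> {mu' n..mu' (Suc n)}"
  and mu_least: "u \<in> {mu' n..mu' (Suc n)} \<Longrightarrow> (f ^^ (m + 2 * n + 2 * k)) u = d \<Longrightarrow> mu n k \<le> u"
  if k: "1 \<le> k"
proof -
  let ?Q = "\<lambda>x. x \<in> {mu' n..mu' (Suc n)} \<and> (f ^^ (m + 2 * n + 2 * k)) x = d"
  have mu'_bounds: "a \<le> mu' n" "mu' (Suc n) \<le> b"
    using mu'_in[of n] mu'_in[of "Suc n"] points_in_ab d_in_ab by auto
  obtain s where s: "s \<in> {d..v}" "(f ^^ (2 * (k - 1))) s = d" using even_iterate_hits_d by blast
  have "(f ^^ (m + 2 * n + 2)) (mu' (Suc n)) = d" using iterate_mu'[of "Suc n"] by simp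
  then have "\<exists>t\<in>{mu' n..mu' (Suc n)}. (f ^^ (m + 2 * n + 2)) t = s"
    by (intro IVT_iterate) (use mu'_bounds iterate_mu'_Suc[of n] mu'_less_Suc[of n] s(1) v_less_z0 in auto)
  then obtain t where t: "t \<in> {mu' n..mu' (Suc n)}" "(f ^^ (m + 2 * n + 2)) t = s" by blast
  have "m + 2 * n + 2 * k = (m + 2 * n + 2) + 2 * (k - 1)" using k by simp
  then have "?Q t" using t s(2) by (simp only: funpow_add_apply)
  moreover have "closed {x. ?Q x}"
    using closed_level_set_atLeastAtMost[OF continuous_on_iterate[OF mu'_bounds]] by simp
  moreover have "bdd_below {x. ?Q x}" by (rule bdd_belowI[of _ "mu' n"]) auto
  ultimately show "mu n k \<in> {mu' n..mu' (Suc n)}"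
    "u \<in> {mu' n..mu' (Suc n)} \<Longrightarrow> (f ^^ (m + 2 * n + 2 * k)) u = d \<Longrightarrow> mu n k \<le> u"
    unfolding mu_def using closed_bdd_below_LEAST[of ?Q] by auto
qed

lemma odd_period_exceeds:
  assumes x: "x \<in> {mu' n..d}" and per: "(f ^^ q) x = x" "odd q"
  shows "m + 2 * n < q"
proof (rule ccontr)
  assume "\<not> m + 2 * n < q"
  have "0 < q" using per(2) by (cases q) auto
  define T where "T = (if q = 1 then 3 else q)"
  have T: "odd T" "3 \<le> T" "T \<le> m + 2 * n"
    using \<open>\<not> m + 2 * n < q\<close> per(2) m_ge unfolding T_def by (auto, presburger)
  have "(f ^^ T) x = x"
    using per funpow_fixed_mult[OF per(1), where t = 3] unfolding T_def by auto
  have "x < d" using x periodic_orbit_avoids_d[OF per(1) \<open>0 < q\<close>, of 0] by auto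
  define j where "j = (m + 2 * n - T) div 2"
  have j: "m + 2 * n = T + 2 * j" unfolding j_def using T m_odd by presburger
  obtain s where s: "s \<in> {d..v}" "(f ^^ (2 * j)) s = d" using even_iterate_hits_d by blast
  have "(f ^^ T) d = f z0" using iterate_d_odd T by simp
  then have "\<exists>t\<in>{x..d}. (f ^^ T) t = s"
    by (intro IVT_iterate) (use \<open>(f ^^ T) x = x\<close> s(1) \<open>x < d\<close> x mu'_in[of n] points_in_ab
      v_less_z0 z0_le_f_z0 in auto)
  then obtain t where t: "t \<in> {x..d}" "(f ^^ T) t = s" by blast
  then have "(f ^^ (m + 2 * n)) t = d" using s(2) j by (simp add: funpow_add_apply)
  moreover have "t \<in> {Min P..d}" using t(1) x mu'_in[of n] by auto
  ultimately have "t = x" using mu'_greatest[of t n] t(1) x by fastforce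
  then show False
    using \<open>(f ^^ (m + 2 * n)) t = d\<close> periodic_orbit_avoids_d[OF per(1) \<open>0 < q\<close>] by auto
qed

lemma odd_period_not_between:
  assumes k: "1 \<le> k" and x: "x \<in> {mu' n..mu n k}" and per: "(f ^^ q) x = x"
    and j: "1 \<le> j" "j \<le> k"
  shows "q \<noteq> m + 2 * n + 2 * j"
proof
  assume q: "q = m + 2 * n + 2 * j"
  then have "0 < q" using m_pos by simp
  have "x \<le> d" using x mu_in[OF k, where n = n] mu'_in[of "Suc n"] by auto
  moreover have "x \<noteq> d" using periodic_orbit_avoids_d[OF per \<open>0 < q\<close>, of 0] by auto
  ultimately have "x < d" by simp
  have "(f ^^ q) (mu' n) = z0" using q iterate_mu' iterate_d_even j
    by (simp add: funpow_add_apply)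
  obtain s where s: "s \<in> {d..v}" "(f ^^ (2 * (k - j))) s = d" using even_iterate_hits_d by blast
  have "\<exists>t\<in>{mu' n..x}. (f ^^ q) t = s"
    by (intro IVT_iterate) (use \<open>(f ^^ q) (mu' n) = z0\<close> per s(1) \<open>x < d\<close> x mu'_in[of n]
      points_in_ab v_less_z0 in auto)
  then obtain t where t: "t \<in> {mu' n..x}" "(f ^^ q) t = s" by blast
  have "m + 2 * n + 2 * k = q + 2 * (k - j)" using q j by simp
  then have "(f ^^ (m + 2 * n + 2 * k)) t = d" using t(2) s(2) by (simp only: funpow_add_apply)
  moreover have "t \<in> {mu' n..mu' (Suc n)}" using t(1) x mu_in[OF k, where n = n] by auto
  ultimately have "t = x" using mu_least[OF k, of t] t(1) x by fastforce
  then show False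
    using \<open>(f ^^ (m + 2 * n + 2 * k)) t = d\<close> periodic_orbit_avoids_d[OF per \<open>0 < q\<close>] by auto
qed

lemma odd_period_bound:
  assumes k: "1 \<le> k" and x: "x \<in> {mu' n..mu n k}" and per: "(f ^^ q) x = x" "odd q"
  shows "m + 2 * n + 2 * k + 2 \<le> q"
proof (rule ccontr)
  assume "\<not> ?thesis"
  then have "q \<le> m + 2 * n + 2 * k" using per(2) m_odd by presburger
  moreover have "x \<in> {mu' n..d}" using x mu_in[OF k, where n = n] mu'_in[of "Suc n"] by auto
  then have "m + 2 * n < q" using odd_period_exceeds per by blast
  ultimately have "q = m + 2 * n + 2 * ((q - m - 2 * n) div 2)"
    and "1 \<le> (q - m - 2 * n) div 2" "(q - m - 2 * n) div 2 \<le> k"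
    using per(2) m_odd by presburger+
  then show False using odd_period_not_between[OF k x per(1)] by blast
qed

end

theorem lemma11:
  fixes f :: "real \<Rightarrow> real" and a b :: real and m :: nat and p :: real
    and P :: "real set" and e v z z0 d :: real
    and mu' :: "nat \<Rightarrow> real" and mu :: "nat \<Rightarrow> nat \<Rightarrow> real"
  assumes ab: "a \<le> b"
    and cont: "continuous_on {a..b} f"
    and maps: "f ` {a..b} \<subseteq> {a..b}"
    and m_odd: "odd m" and m_ge: "m \<ge> 3"
    and p_in: "p \<in> {a..b}"
    and p_per: "least_period_point f m p"
    and P_def: "P = {(f ^^ i) p | i. i < m}"
    and e_def: "e = (f ^^ (m - 1)) (Min P)"
    and v: "v \<in> {Min P..<e}" "f v = e"
    and z: "z \<in> {v<..<e}" "f z = z"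
    and z0_def: "z0 = (LEAST x. x \<in> {v..z} \<and> f (f x) = x)"
    and d_def: "d = (GREATEST x. x \<in> {Min P..v} \<and> f (f x) = z0)"
    and mu'_def: "\<And>n. mu' n = (GREATEST x. x \<in> {Min P..d} \<and> (f ^^ (m + 2*n)) x = d)"
    and mu_def: "\<And>n k. mu n k =
        (LEAST x. x \<in> {mu' n..mu' (n+1)} \<and> (f ^^ (m + 2*n + 2*k)) x = d)"
  shows "\<forall>n k x q. n \<ge> 1 \<and> k \<ge> 1 \<and> x \<in> {mu' n..mu n k} \<and>
           least_period_point f q x \<and> odd q \<longrightarrow> q \<ge> m + 2*n + 2*k + 2"
proof (intro allI impI, elim conjE)
  interpret odd_cycle_setup f a b m p P e v z z0 d mu' mu
    by (rule odd_cycle_setup.intro) fact+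
  fix n k x q
  assume "n \<ge> 1" and k: "k \<ge> 1" and x: "x \<in> {mu' n..mu n k}"
    and "least_period_point f q x" and q: "odd q"
  then have "(f ^^ q) x = x" unfolding least_period_point_def by blast
  then show "q \<ge> m + 2*n + 2*k + 2" by (rule odd_period_bound[OF k x _ q])
qed

end
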